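(* Let $G$ be a connected graph of order $n\geq 2$ and let $g:V(G_1)\to V(G_2)$ be a constant function. Then $Dist(F_G)=Dist(G)$.
   Context: All graphs are finite, simple and undirected. A labeling $f:V(H)\to\{1,\dots,t\}$ is $t$-distinguishing if the only label-preserving automorphism of $H$ is the identity; $Dist(H)$ is the least such $t$. Functigraph: for disjoint copies $G_1,G_2$ of $G$ and a function $g:V(G_1)\to V(G_2)$, $F_G$ has vertex set $V(G_1)\cup V(G_2)$ and edge set $E(G_1)\cup E(G_2)\cup\{uv: u\in V(G_1),\ g(u)=v\}$. *)

theory Defs
  imports Main
begin

definition simple_graph :: "'a set \<Rightarrow> ('a \<Rightarrow> 'a \<Rightarrow> bool) \<Rightarrow> bool" where
  "simple_graph V E \<longleftrightarrow> finite V \<and> (\<forall>u v. E u v \<longrightarrow> u \<in> V \<and> v \<in> V)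
     \<and> (\<forall>u v. E u v \<longrightarrow> E v u) \<and> (\<forall>u. \<not> E u u)"

definition connected_graph :: "'a set \<Rightarrow> ('a \<Rightarrow> 'a \<Rightarrow> bool) \<Rightarrow> bool" where
  "connected_graph V E \<longleftrightarrow> (\<forall>u\<in>V. \<forall>v\<in>V. E\<^sup>*\<^sup>* u v)"

definition automorphism :: "'a set \<Rightarrow> ('a \<Rightarrow> 'a \<Rightarrow> bool) \<Rightarrow> ('a \<Rightarrow> 'a) \<Rightarrow> bool" where
  "automorphism V E \<sigma> \<longleftrightarrow> bij_betw \<sigma> V V \<and> (\<forall>u\<in>V. \<forall>v\<in>V. E (\<sigma> u) (\<sigma> v) \<longleftrightarrow> E u v)"

definition distinguishing :: "'a set \<Rightarrow> ('a \<Rightarrow> 'a \<Rightarrow> bool) \<Rightarrow> nat \<Rightarrow> ('a \<Rightarrow> nat) \<Rightarrow> bool" where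
  "distinguishing V E t f \<longleftrightarrow> (\<forall>v\<in>V. f v \<in> {1..t}) \<and>
     (\<forall>\<sigma>. automorphism V E \<sigma> \<and> (\<forall>v\<in>V. f (\<sigma> v) = f v) \<longrightarrow> (\<forall>v\<in>V. \<sigma> v = v))"

definition Dist :: "'a set \<Rightarrow> ('a \<Rightarrow> 'a \<Rightarrow> bool) \<Rightarrow> nat" where
  "Dist V E = (LEAST t. \<exists>f. distinguishing V E t f)"

text \<open>Functigraph: G1 = Inl-copy, G2 = Inr-copy of G, plus edges u -- g(u).\<close>
definition fg_vertices :: "'a set \<Rightarrow> ('a + 'a) set" where
  "fg_vertices V = Inl ` V \<union> Inr ` V"

fun fg_edges :: "('a \<Rightarrow> 'a \<Rightarrow> bool) \<Rightarrow> ('a \<Rightarrow> 'a) \<Rightarrow> 'a + 'a \<Rightarrow> 'a + 'a \<Rightarrow> bool" where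
  "fg_edges E g (Inl u) (Inl v) = E u v"
| "fg_edges E g (Inr u) (Inr v) = E u v"
| "fg_edges E g (Inl u) (Inr v) = (g u = v)"
| "fg_edges E g (Inr v) (Inl u) = (g u = v)"

end

theory Submission
  imports Defs
begin

text \<open>The hub \<open>Inr c\<close> (the value of the constant function) is adjacent to all of the
first copy, so its degree exceeds that of every other vertex and every automorphism of the
functigraph fixes it. Removing the hub leaves the first copy (connected, with \<open>n\<close> vertices) and
the rest of the second copy (with \<open>n - 1\<close> vertices) with no edges between them, so an
automorphism maps each copy onto itself and restricts to automorphisms of \<open>G\<close> on both copies.
Hence distinguishing labelings transfer in both directions: copy a labeling of \<open>G\<close> onto both
copies, and restrict a labeling of the functigraph to the first copy, extending automorphisms of
\<open>G\<close> by the identity on the second copy.\<close>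

definition degree :: "'a set \<Rightarrow> ('a \<Rightarrow> 'a \<Rightarrow> bool) \<Rightarrow> 'a \<Rightarrow> nat" where
  "degree V E x = card {y \<in> V. E x y}"

definition induced :: "'a set \<Rightarrow> ('a \<Rightarrow> 'a \<Rightarrow> bool) \<Rightarrow> 'a \<Rightarrow> 'a \<Rightarrow> bool" where
  "induced U E x y \<longleftrightarrow> x \<in> U \<and> y \<in> U \<and> E x y"

lemma automorphism_in: "automorphism V E s \<Longrightarrow> x \<in> V \<Longrightarrow> s x \<in> V"
  unfolding automorphism_def bij_betw_def by blast

lemma automorphism_inj_on: "automorphism V E s \<Longrightarrow> inj_on s V"
  unfolding automorphism_def bij_betw_def by blast

lemma automorphism_degree:
  assumes s: "automorphism V E s" and x: "x \<in> V"
  shows "degree V E (s x) = degree V E x"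
proof -
  have bij: "bij_betw s V V" and adj: "\<forall>u\<in>V. \<forall>v\<in>V. E (s u) (s v) \<longleftrightarrow> E u v"
    using s unfolding automorphism_def by auto
  have "{y \<in> V. E (s x) y} = s ` {y \<in> V. E x y}"
    using bij adj x by (auto simp: bij_betw_def) (metis (no_types, lifting) image_iff mem_Collect_eq)
  moreover have "inj_on s {y \<in> V. E x y}"
    using bij by (auto simp: bij_betw_def intro: inj_on_subset)
  ultimately show ?thesis
    unfolding degree_def by (simp add: card_image)
qed

lemma automorphism_induced_rtranclp:
  assumes s: "automorphism V E s" and "U \<subseteq> V" "s ` U \<subseteq> U"
    and "(induced U E)\<^sup>*\<^sup>* x y"
  shows "(induced U E)\<^sup>*\<^sup>* (s x) (s y)"
  using assms(4)
proof (induction rule: rtranclp_induct)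
  case (step y z)
  then have "induced U E (s y) (s z)"
    using s assms(2,3) by (auto simp: induced_def automorphism_def)
  with step.IH show ?case by simp
qed simp

lemma automorphism_restrict:
  assumes s: "automorphism W R s" and "finite V"
    and \<iota>: "inj_on \<iota> V" "\<iota> ` V \<subseteq> W" "\<And>u v. u \<in> V \<Longrightarrow> v \<in> V \<Longrightarrow> R (\<iota> u) (\<iota> v) \<longleftrightarrow> E u v"
    and t: "\<And>u. u \<in> V \<Longrightarrow> t u \<in> V \<and> s (\<iota> u) = \<iota> (t u)"
  shows "automorphism V E t"
proof -
  have adj: "\<forall>x\<in>W. \<forall>y\<in>W. R (s x) (s y) \<longleftrightarrow> R x y"
    using s unfolding automorphism_def by blast
  have "inj_on t V"
  proof (rule inj_onI)
    fix x y assume "x \<in> V" "y \<in> V" "t x = t y"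
    then have "s (\<iota> x) = s (\<iota> y)" using t by simp
    then show "x = y"
      using automorphism_inj_on[OF s] \<iota>(1,2) \<open>x \<in> V\<close> \<open>y \<in> V\<close> by (auto dest: inj_onD)
  qed
  moreover have "t ` V = V"
    using \<open>inj_on t V\<close> \<open>finite V\<close> t by (intro endo_inj_surj) auto
  moreover have "E (t u) (t v) \<longleftrightarrow> E u v" if "u \<in> V" "v \<in> V" for u v
    using adj \<iota> t that by (metis image_subset_iff)
  ultimately show ?thesis
    unfolding automorphism_def bij_betw_def by blast
qed

lemma distinguishing_fixes_embedded_copy:
  assumes f: "distinguishing V E t f" and s: "automorphism W R s" and "finite V"
    and \<iota>: "inj_on \<iota> V" "\<iota> ` V \<subseteq> W" "\<And>u v. u \<in> V \<Longrightarrow> v \<in> V \<Longrightarrow> R (\<iota> u) (\<iota> v) \<longleftrightarrow> E u v"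
    and maps: "\<And>u. u \<in> V \<Longrightarrow> s (\<iota> u) \<in> \<iota> ` V"
    and labels: "\<And>u. u \<in> V \<Longrightarrow> h (s (\<iota> u)) = h (\<iota> u)" "\<And>u. u \<in> V \<Longrightarrow> h (\<iota> u) = f u"
    and "u \<in> V"
  shows "s (\<iota> u) = \<iota> u"
proof -
  define \<tau> where "\<tau> v = inv_into V \<iota> (s (\<iota> v))" for v
  have \<tau>: "\<tau> v \<in> V \<and> s (\<iota> v) = \<iota> (\<tau> v)" if "v \<in> V" for v
    using maps[OF that] unfolding \<tau>_def by (simp add: inv_into_into f_inv_into_f)
  have "automorphism V E \<tau>"
    using automorphism_restrict[OF s \<open>finite V\<close> \<iota>] \<tau> by blast
  moreover have "\<forall>v\<in>V. f (\<tau> v) = f v"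
    using \<tau> labels by metis
  ultimately have "\<tau> u = u"
    using f \<open>u \<in> V\<close> unfolding distinguishing_def by blast
  then show ?thesis
    using \<tau>[OF \<open>u \<in> V\<close>] by simp
qed

lemma distinguishing_card: "finite V \<Longrightarrow> \<exists>f. distinguishing V E (card V) f"
proof -
  assume "finite V"
  then obtain h where h: "bij_betw h V {0..<card V}"
    using ex_bij_betw_finite_nat by blast
  have "distinguishing V E (card V) (\<lambda>v. Suc (h v))"
    unfolding distinguishing_def
  proof (intro conjI allI impI ballI)
    fix v assume "v \<in> V"
    then show "Suc (h v) \<in> {1..card V}"
      using bij_betwE[OF h] by fastforce
  next
    fix s v assume "automorphism V E s \<and> (\<forall>v\<in>V. Suc (h (s v)) = Suc (h v))" and "v \<in> V"
    then show "s v = v"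
      using h automorphism_in[of V E s v] by (auto simp: bij_betw_def inj_on_def)
  qed
  then show ?thesis by blast
qed

lemma Dist_le: "distinguishing V E t f \<Longrightarrow> Dist V E \<le> t"
  unfolding Dist_def by (blast intro: Least_le)

lemma distinguishing_Dist:
  assumes "finite V"
  shows "\<exists>f. distinguishing V E (Dist V E) f"
  unfolding Dist_def
  by (rule LeastI_ex[where P = "\<lambda>t. \<exists>f. distinguishing V E t f"])
    (use distinguishing_card[OF assms] in blast)

lemma fg_vertices_iff [simp]:
  "Inl u \<in> fg_vertices V \<longleftrightarrow> u \<in> V" "Inr u \<in> fg_vertices V \<longleftrightarrow> u \<in> V"
  unfolding fg_vertices_def by auto

lemma fg_verticesE:
  assumes "x \<in> fg_vertices V"
  obtains u where "u \<in> V" "x = Inl u" | u where "u \<in> V" "x = Inr u"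
  using assms unfolding fg_vertices_def by auto

lemma image_Inl_subset_fg_vertices: "Inl ` V \<subseteq> fg_vertices V"
  unfolding fg_vertices_def by blast

lemma image_Inr_subset_fg_vertices: "Inr ` V \<subseteq> fg_vertices V"
  unfolding fg_vertices_def by blast

lemma finite_fg_vertices: "finite V \<Longrightarrow> finite (fg_vertices V)"
  unfolding fg_vertices_def by simp

locale constant_functigraph =
  fixes V :: "'a set" and E :: "'a \<Rightarrow> 'a \<Rightarrow> bool" and g :: "'a \<Rightarrow> 'a" and c :: 'a
  assumes simple: "simple_graph V E"
    and connected: "connected_graph V E"
    and two_vertices: "card V \<ge> 2"
    and hub_in: "c \<in> V"
    and g_constant: "\<forall>u\<in>V. g u = c"
begin

abbreviation "W \<equiv> fg_vertices V"
abbreviation "R \<equiv> fg_edges E g"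

lemma finite_V: "finite V"
  using simple by (simp add: simple_graph_def)

lemma edge_in: "E u v \<Longrightarrow> u \<in> V \<and> v \<in> V"
  using simple by (simp add: simple_graph_def)

lemma irreflexive: "\<not> E u u"
  using simple by (simp add: simple_graph_def)

lemma automorphism_extend:
  assumes t: "automorphism V E t"
  shows "automorphism W R (map_sum t id)"
proof -
  have tV: "\<And>u. u \<in> V \<Longrightarrow> t u \<in> V" and adj: "\<forall>u\<in>V. \<forall>v\<in>V. E (t u) (t v) \<longleftrightarrow> E u v"
    using t automorphism_in[OF t] unfolding automorphism_def by auto
  have inj: "inj_on (map_sum t id) W"
  proof (rule inj_onI)
    fix x y assume "x \<in> W" "y \<in> W" "map_sum t id x = map_sum t id y"
    then show "x = y"
      using automorphism_inj_on[OF t] by (elim fg_verticesE) (auto dest: inj_onD)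
  qed
  moreover have "map_sum t id ` W = W"
    using tV inj finite_fg_vertices[OF finite_V] by (intro endo_inj_surj) (auto simp: fg_vertices_def)
  moreover have "R (map_sum t id x) (map_sum t id y) \<longleftrightarrow> R x y" if "x \<in> W" "y \<in> W" for x y
    using that adj g_constant tV by (auto simp: fg_vertices_def)
  ultimately show ?thesis
    unfolding automorphism_def bij_betw_def by blast
qed

lemma hub_has_neighbour: obtains w where "E c w"
proof -
  obtain v where "v \<in> V" "v \<noteq> c"
    using two_vertices hub_in
    by (metis card_le_Suc0_iff_eq finite_V not_less_eq_eq numeral_2_eq_2)
  moreover have "E\<^sup>*\<^sup>* c v"
    using connected hub_in \<open>v \<in> V\<close> by (simp add: connected_graph_def)
  ultimately show ?thesis
    using that by (metis converse_rtranclpE)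
qed

lemma degree_hub: "degree W R (Inr c) \<ge> card V + 1"
proof -
  obtain w where w: "E c w" using hub_has_neighbour .
  have "card V + 1 = card (insert (Inr w) (Inl ` V))"
    using finite_V by (subst card_insert_disjoint) (auto simp: card_image)
  also have "\<dots> \<le> card {y \<in> W. R (Inr c) y}"
    using w edge_in g_constant finite_fg_vertices[OF finite_V] by (intro card_mono) auto
  finally show ?thesis
    unfolding degree_def .
qed

lemma degree_non_hub:
  assumes "x \<in> W" "x \<noteq> Inr c"
  shows "degree W R x \<le> card V"
  using assms(1)
proof (cases rule: fg_verticesE)
  case (1 u)
  have "degree W R x \<le> card (insert (Inr c) (Inl ` (V - {u})))"
    unfolding degree_def using 1 g_constant irreflexive finite_V
    by (intro card_mono) (auto simp: fg_vertices_def)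
  also have "\<dots> \<le> card V"
    using finite_V 1(1) two_vertices by (simp add: card_insert_if card_image)
  finally show ?thesis .
next
  case (2 u)
  have "degree W R x \<le> card (Inr ` V :: ('a + 'a) set)"
    unfolding degree_def using 2 assms(2) g_constant finite_V
    by (intro card_mono) (auto simp: fg_vertices_def)
  then show ?thesis
    by (simp add: card_image)
qed

lemma automorphism_fixes_hub:
  assumes s: "automorphism W R s"
  shows "s (Inr c) = Inr c"
proof (rule ccontr)
  assume "s (Inr c) \<noteq> Inr c"
  then have "degree W R (s (Inr c)) \<le> card V"
    using automorphism_in[OF s] hub_in by (intro degree_non_hub) auto
  with degree_hub show False
    using automorphism_degree[OF s] hub_in by simp
qed

abbreviation "W' \<equiv> W - {Inr c}"

text \<open>All edges between the two copies end at the hub, so away from it each copy is closed.\<close>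

lemma induced_rtranclp_isl:
  "(induced W' R)\<^sup>*\<^sup>* x y \<Longrightarrow> isl x \<longleftrightarrow> isl y"
proof (induction rule: rtranclp_induct)
  case (step y z)
  then show ?case
    using g_constant by (auto simp: induced_def fg_vertices_def)
qed simp

lemma induced_rtranclp_Inl:
  assumes "u \<in> V" "v \<in> V"
  shows "(induced W' R)\<^sup>*\<^sup>* (Inl u) (Inl v)"
proof -
  have "E\<^sup>*\<^sup>* u v"
    using connected assms by (simp add: connected_graph_def)
  then show ?thesis
  proof (induction rule: rtranclp_induct)
    case (step y z)
    then have "induced W' R (Inl y) (Inl z)"
      using edge_in by (auto simp: induced_def)
    with step.IH show ?case by simp
  qed simp
qed

lemma automorphism_maps_Inl:
  assumes s: "automorphism W R s" and "u \<in> V"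
  shows "s (Inl u) \<in> Inl ` V"
proof (rule ccontr)
  assume not_Inl: "s (Inl u) \<notin> Inl ` V"
  have inj: "inj_on s W" using automorphism_inj_on[OF s] .
  have hub: "s (Inr c) = Inr c" using automorphism_fixes_hub[OF s] .
  have W': "s ` W' \<subseteq> W'"
    using inj hub hub_in automorphism_in[OF s] by auto (metis fg_vertices_iff(2) inj_onD)
  have "s ` Inl ` V \<subseteq> Inr ` (V - {c})"
  proof
    fix y assume "y \<in> s ` Inl ` V"
    then obtain v where v: "v \<in> V" "y = s (Inl v)" by blast
    have "(induced W' R)\<^sup>*\<^sup>* (s (Inl u)) y"
      using automorphism_induced_rtranclp[OF s _ W' induced_rtranclp_Inl[OF \<open>u \<in> V\<close> v(1)]] v
      by blast
    moreover have "s (Inl u) \<in> W'" "y \<in> W'"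
      using W' \<open>u \<in> V\<close> v by (auto simp: image_subset_iff)
    ultimately show "y \<in> Inr ` (V - {c})"
      using induced_rtranclp_isl not_Inl by (fastforce simp: fg_vertices_def)
  qed
  then have "card (s ` Inl ` V) \<le> card (Inr ` (V - {c}) :: ('a + 'a) set)"
    using finite_V by (intro card_mono) auto
  moreover have "card (s ` Inl ` V) = card V"
    using inj_on_subset[OF inj image_Inl_subset_fg_vertices] finite_V by (simp add: card_image)
  ultimately show False
    using finite_V hub_in two_vertices by (simp add: card_image)
qed

lemma automorphism_maps_Inr:
  assumes s: "automorphism W R s" and "u \<in> V"
  shows "s (Inr u) \<in> Inr ` V"
proof -
  have "s ` Inl ` V = Inl ` V"
    using automorphism_maps_Inl[OF s] finite_V
      inj_on_subset[OF automorphism_inj_on[OF s] image_Inl_subset_fg_vertices]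
    by (intro endo_inj_surj) auto
  have "s (Inr u) \<notin> Inl ` V"
  proof
    assume "s (Inr u) \<in> Inl ` V"
    then obtain v where "v \<in> V" "s (Inr u) = s (Inl v)"
      using \<open>s ` Inl ` V = Inl ` V\<close> by (metis imageE)
    then show False
      using automorphism_inj_on[OF s] \<open>u \<in> V\<close> by (metis fg_vertices_iff inj_onD sum.distinct(2))
  qed
  moreover have "s (Inr u) \<in> Inl ` V \<union> Inr ` V"
    using automorphism_in[OF s] \<open>u \<in> V\<close> unfolding fg_vertices_def by simp
  ultimately show ?thesis by blast
qed

lemma distinguishing_of_graph:
  assumes f: "distinguishing V E t f"
  shows "distinguishing W R t (case_sum f f)"
  unfolding distinguishing_def
proof (intro conjI allI impI ballI)
  fix x assume "x \<in> W"
  then show "case_sum f f x \<in> {1..t}"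
    using f by (auto simp: distinguishing_def fg_vertices_def)
next
  fix s x assume "automorphism W R s \<and> (\<forall>x\<in>W. case_sum f f (s x) = case_sum f f x)"
    and "x \<in> W"
  then have s: "automorphism W R s" and labels: "\<forall>x\<in>W. case_sum f f (s x) = case_sum f f x"
    by blast+
  from \<open>x \<in> W\<close> show "s x = x"
  proof (cases rule: fg_verticesE)
    case (1 u)
    show ?thesis
      unfolding \<open>x = Inl u\<close>
      by (rule distinguishing_fixes_embedded_copy[where \<iota> = Inl and h = "case_sum f f",
            OF f s finite_V _ image_Inl_subset_fg_vertices])
        (use labels automorphism_maps_Inl[OF s] \<open>u \<in> V\<close> in auto)
  next
    case (2 u)
    show ?thesis
      unfolding \<open>x = Inr u\<close>
      by (rule distinguishing_fixes_embedded_copy[where \<iota> = Inr and h = "case_sum f f",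
            OF f s finite_V _ image_Inr_subset_fg_vertices])
        (use labels automorphism_maps_Inr[OF s] \<open>u \<in> V\<close> in auto)
  qed
qed

lemma distinguishing_of_functigraph:
  assumes h: "distinguishing W R t h"
  shows "distinguishing V E t (h \<circ> Inl)"
  unfolding distinguishing_def
proof (intro conjI allI impI ballI)
  fix v assume "v \<in> V"
  then show "(h \<circ> Inl) v \<in> {1..t}"
    using h by (simp add: distinguishing_def)
next
  fix \<tau> v assume \<tau>: "automorphism V E \<tau> \<and> (\<forall>v\<in>V. (h \<circ> Inl) (\<tau> v) = (h \<circ> Inl) v)" and "v \<in> V"
  have "\<forall>x\<in>W. h (map_sum \<tau> id x) = h x"
    using \<tau> by (auto simp: fg_vertices_def)
  then have "\<forall>x\<in>W. map_sum \<tau> id x = x"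
    using h automorphism_extend \<tau> unfolding distinguishing_def by blast
  moreover have "(Inl v :: 'a + 'a) \<in> W"
    using \<open>v \<in> V\<close> by simp
  ultimately have "map_sum \<tau> id (Inl v) = (Inl v :: 'a + 'a)"
    by (rule bspec)
  then show "\<tau> v = v" by simp
qed

end

theorem lemma2p3:
  fixes V :: "'a set" and E :: "'a \<Rightarrow> 'a \<Rightarrow> bool" and g :: "'a \<Rightarrow> 'a"
  assumes "simple_graph V E"
    and "connected_graph V E"
    and "card V \<ge> 2"
    and "c \<in> V" and "\<forall>u\<in>V. g u = c"
  shows "Dist (fg_vertices V) (fg_edges E g) = Dist V E"
proof -
  interpret constant_functigraph V E g c
    using assms by unfold_locales
  obtain f where "distinguishing V E (Dist V E) f"
    using distinguishing_Dist[OF finite_V] by blast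
  then have "Dist W R \<le> Dist V E"
    by (rule Dist_le[OF distinguishing_of_graph])
  moreover obtain h where "distinguishing W R (Dist W R) h"
    using distinguishing_Dist[OF finite_fg_vertices[OF finite_V]] by blast
  then have "Dist V E \<le> Dist W R"
    by (rule Dist_le[OF distinguishing_of_functigraph])
  ultimately show ?thesis by simp
qed

end
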